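(* Let $n\ge 1$, let $F:\mathbb{F}_{2^n}\to\mathbb{F}_{2^n}$ be a function and let $c\in\mathbb{F}_{2^n}^*$. Then ${}_c\Delta_F(a,b)={}_{c^{-1}}\Delta_F(a,bc^{-1})$ for all $a\in\mathbb{F}_{2^n}^*$ and $b\in\mathbb{F}_{2^n}$. If moreover $F$ is a permutation of $\mathbb{F}_{2^n}$, then ${}_c\Delta_F={}_{c^{-1}}\Delta_F$.
   Context: For $F:\mathbb{F}_{2^n}\to\mathbb{F}_{2^n}$ and $c\in\mathbb{F}_{2^n}$, the $c$-differential of $F$ in direction $a$ is ${}_cD_aF(x)=F(x+a)-cF(x)$ (in characteristic $2$ this is $F(x+a)+cF(x)$). For $a,b\in\mathbb{F}_{2^n}$, ${}_c\Delta_F(a,b)$ denotes the number of $x\in\mathbb{F}_{2^n}$ with ${}_cD_aF(x)=b$. The $c$-differential uniformity of $F$ is ${}_c\Delta_F=\max\{{}_c\Delta_F(a,b): a,b\in\mathbb{F}_{2^n},\ a\neq 0 \text{ if } c=1\}$. *)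

theory Defs
  imports Main
begin

definition c_diff :: "('a::field \<Rightarrow> 'a) \<Rightarrow> 'a \<Rightarrow> 'a \<Rightarrow> 'a \<Rightarrow> 'a" where
  "c_diff F c a x = F (x + a) - c * F x"

definition c_Delta :: "('a::{field,finite} \<Rightarrow> 'a) \<Rightarrow> 'a \<Rightarrow> 'a \<Rightarrow> 'a \<Rightarrow> nat" where
  "c_Delta F c a b = card {x. c_diff F c a x = b}"

definition c_unif :: "('a::{field,finite} \<Rightarrow> 'a) \<Rightarrow> 'a \<Rightarrow> nat" where
  "c_unif F c = Max {c_Delta F c a b | a b. a \<noteq> 0 \<or> c \<noteq> 1}"

end

theory Submission
  imports Defs "HOL-Number_Theory.Residues"
begin

text \<open>In characteristic 2 the translation \<open>x \<mapsto> x + a\<close> is an involution, and it maps the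
  solutions of \<open>F(x + a) + c F(x) = b\<close> bijectively onto those of
  \<open>F(x + a) + c\<^sup>-\<^sup>1 F(x) = b c\<^sup>-\<^sup>1\<close>. For \<open>a = 0\<close> and \<open>c \<noteq> 1\<close> the equation reads
  \<open>(1 + c) F(x) = b\<close>, which a permutation \<open>F\<close> solves exactly once, for \<open>c\<close> and \<open>c\<^sup>-\<^sup>1\<close> alike;
  so both uniformities are maxima of the same set of values.\<close>

lemma CHAR_eq_prime_if_CARD_eq_power:
  assumes "prime p" and "card (UNIV :: 'a::{idom,finite} set) = p ^ n"
  shows "CHAR('a) = p"
proof -
  have "prime CHAR('a)"
    by (simp add: prime_CHAR_semidom finite_imp_CHAR_pos)
  moreover have "CHAR('a) dvd p ^ n"
    using CHAR_dvd_CARD[where 'a='a] assms(2) by simp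
  ultimately have "CHAR('a) dvd p"
    using prime_dvd_power by blast
  with \<open>prime CHAR('a)\<close> assms(1) show ?thesis
    by (simp add: primes_dvd_imp_eq)
qed

lemma c_diff_inverse_translate:
  fixes F :: "'a::field \<Rightarrow> 'a"
  assumes "CHAR('a) = 2" and "c \<noteq> 0"
  shows "c_diff F (inverse c) a (x + a) = inverse c * c_diff F c a x"
proof -
  have "a + a = 0"
    using minus_CHAR_2[OF assms(1), of a a] by simp
  then have "x + a + a = x"
    by (metis add.assoc add.right_neutral)
  then have "c_diff F (inverse c) a (x + a) = F x - inverse c * F (x + a)"
    by (simp only: c_diff_def)
  also have "\<dots> = inverse c * F (x + a) - F x"
    by (metis minus_CHAR_2[OF assms(1)] add.commute)
  also have "\<dots> = inverse c * c_diff F c a x"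
    using assms(2) by (simp add: c_diff_def right_diff_distrib)
  finally show ?thesis .
qed

lemma c_Delta_inverse:
  fixes F :: "'a::{field,finite} \<Rightarrow> 'a"
  assumes "CHAR('a) = 2" and "c \<noteq> 0"
  shows "c_Delta F c a b = c_Delta F (inverse c) a (b * inverse c)"
proof -
  let ?S = "{y. c_diff F (inverse c) a y = b * inverse c}"
  have "{x. c_diff F c a x = b} = (\<lambda>x. x + a) -` ?S"
    using assms by (auto simp: c_diff_inverse_translate mult.commute)
  also have "card \<dots> = card ?S"
    by (rule card_vimage_inj) (simp_all add: inj_def surj_def)
  finally show ?thesis
    unfolding c_Delta_def .
qed

lemma c_Delta_zero_direction:
  fixes F :: "'a::{field,finite} \<Rightarrow> 'a"
  assumes "bij F" and "c \<noteq> 1"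
  shows "c_Delta F c 0 b = 1"
proof -
  have "{x. c_diff F c 0 x = b} = F -` {b / (1 - c)}"
    using assms(2) by (auto simp: c_diff_def field_simps)
  also have "card \<dots> = card {b / (1 - c)}"
    using assms(1) by (intro card_vimage_inj) (simp_all add: bij_is_inj bij_is_surj)
  finally show ?thesis
    by (simp add: c_Delta_def)
qed

lemma c_Delta_values_subset_inverse:
  fixes F :: "'a::{field,finite} \<Rightarrow> 'a"
  assumes "CHAR('a) = 2" and "c \<noteq> 0" and "bij F"
  shows "{c_Delta F c a b | a b. a \<noteq> 0 \<or> c \<noteq> 1}
    \<subseteq> {c_Delta F (inverse c) a b | a b. a \<noteq> 0 \<or> inverse c \<noteq> 1}"
proof clarify
  fix a b :: 'a
  assume "a \<noteq> 0 \<or> c \<noteq> 1"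
  then consider "a \<noteq> 0" | "a = 0" and "c \<noteq> 1"
    by blast
  then show "\<exists>a' b'. c_Delta F c a b = c_Delta F (inverse c) a' b' \<and> (a' \<noteq> 0 \<or> inverse c \<noteq> 1)"
  proof cases
    case 1
    then show ?thesis
      using c_Delta_inverse[OF assms(1,2)] by blast
  next
    case 2
    then have "inverse c \<noteq> 1"
      by (metis inverse_1 inverse_inverse_eq)
    with 2 show ?thesis
      using c_Delta_zero_direction[OF assms(3)] by metis
  qed
qed

lemma c_unif_inverse:
  fixes F :: "'a::{field,finite} \<Rightarrow> 'a"
  assumes "CHAR('a) = 2" and "c \<noteq> 0" and "bij F"
  shows "c_unif F c = c_unif F (inverse c)"
proof -
  have "{c_Delta F c a b | a b. a \<noteq> 0 \<or> c \<noteq> 1}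
      = {c_Delta F (inverse c) a b | a b. a \<noteq> 0 \<or> inverse c \<noteq> 1}"
    using c_Delta_values_subset_inverse[OF assms(1,2,3)]
      c_Delta_values_subset_inverse[of "inverse c", OF assms(1) _ assms(3)] assms(2)
    by simp
  then show ?thesis
    by (simp add: c_unif_def)
qed

theorem mainTheorem1:
  fixes F :: "'a::{field,finite} \<Rightarrow> 'a" and c :: 'a and n :: nat
  assumes "n \<ge> 1"
    and "card (UNIV :: 'a set) = 2 ^ n"
    and "c \<noteq> 0"
  shows "(\<forall>a b. a \<noteq> 0 \<longrightarrow> c_Delta F c a b = c_Delta F (inverse c) a (b * inverse c))
         \<and> (bij F \<longrightarrow> c_unif F c = c_unif F (inverse c))"
proof -
  have "CHAR('a) = 2"
    using CHAR_eq_prime_if_CARD_eq_power[OF two_is_prime_nat assms(2)] .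
  with assms(3) show ?thesis
    using c_Delta_inverse c_unif_inverse by blast
qed

end
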